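(* Let $s\ge 1$ be an integer, let $(G,Z)$ be a plantation, let $F=G\setminus Z$, and let $N$ be the set of vertices of $V(G)\setminus Z$ with a neighbour in $Z$. Suppose that every component of $F$ contains at least two vertices of $N$. Then there is a normal set $\mathcal{S}$ of transitions of $(G,Z)$ with $|\mathcal{S}|\ge |N|/4$.
   Context: Graphs are finite and simple. Two subgraphs are anticomplete if their vertex sets are disjoint and no edge joins them. $G$ is $s\mathcal{O}$-free if no $s$ cycles of $G$ are pairwise vertex-disjoint and pairwise anticomplete. $Z\subseteq V(G)$ is cycle-hitting if every cycle of $G$ has a vertex in $Z$. A plantation is a pair $(G,Z)$ with $G$ an $s\mathcal{O}$-free graph and $Z$ cycle-hitting. A transition of $(G,Z)$ is a path of $F$ of length at least one with both ends in $N$ and no internal vertex in $N$. A set $\mathcal{S}$ of transitions is normal if (i) for all distinct $P,Q\in\mathcal{S}$, either $P,Q$ are anticomplete or $P,Q$ have a common end, and (ii) each $P\in\mathcal{S}$ has an edge that belongs to no other member of $\mathcal{S}$. *)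

theory Defs
  imports Complex_Main
begin

definition simple_graph :: "'a set \<Rightarrow> ('a \<Rightarrow> 'a \<Rightarrow> bool) \<Rightarrow> bool" where
  "simple_graph V adj \<longleftrightarrow> finite V \<and>
     (\<forall>u v. adj u v \<longrightarrow> u \<in> V \<and> v \<in> V \<and> u \<noteq> v) \<and>
     (\<forall>u v. adj u v \<longleftrightarrow> adj v u)"

definition is_cycle :: "'a set \<Rightarrow> ('a \<Rightarrow> 'a \<Rightarrow> bool) \<Rightarrow> 'a list \<Rightarrow> bool" where
  "is_cycle V adj xs \<longleftrightarrow> length xs \<ge> 3 \<and> distinct xs \<and> set xs \<subseteq> V \<and>
     (\<forall>i < length xs - 1. adj (xs ! i) (xs ! (i + 1))) \<and> adj (last xs) (hd xs)"

definition is_path :: "'a set \<Rightarrow> ('a \<Rightarrow> 'a \<Rightarrow> bool) \<Rightarrow> 'a list \<Rightarrow> bool" where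
  "is_path V adj xs \<longleftrightarrow> xs \<noteq> [] \<and> distinct xs \<and> set xs \<subseteq> V \<and>
     (\<forall>i < length xs - 1. adj (xs ! i) (xs ! (i + 1)))"

definition path_edges :: "'a list \<Rightarrow> 'a set set" where
  "path_edges xs = {{xs ! i, xs ! (i + 1)} | i. i < length xs - 1}"

definition path_ends :: "'a list \<Rightarrow> 'a set" where
  "path_ends xs = {hd xs, last xs}"

definition anticomplete :: "('a \<Rightarrow> 'a \<Rightarrow> bool) \<Rightarrow> 'a set \<Rightarrow> 'a set \<Rightarrow> bool" where
  "anticomplete adj A B \<longleftrightarrow> A \<inter> B = {} \<and> (\<forall>a\<in>A. \<forall>b\<in>B. \<not> adj a b)"

definition sO_free :: "nat \<Rightarrow> 'a set \<Rightarrow> ('a \<Rightarrow> 'a \<Rightarrow> bool) \<Rightarrow> bool" where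
  "sO_free s V adj \<longleftrightarrow> \<not> (\<exists>C :: nat \<Rightarrow> 'a list.
      (\<forall>i<s. is_cycle V adj (C i)) \<and>
      (\<forall>i<s. \<forall>j<s. i \<noteq> j \<longrightarrow> anticomplete adj (set (C i)) (set (C j))))"

definition cycle_hitting :: "'a set \<Rightarrow> ('a \<Rightarrow> 'a \<Rightarrow> bool) \<Rightarrow> 'a set \<Rightarrow> bool" where
  "cycle_hitting V adj Z \<longleftrightarrow> Z \<subseteq> V \<and> (\<forall>xs. is_cycle V adj xs \<longrightarrow> set xs \<inter> Z \<noteq> {})"

definition plantation :: "nat \<Rightarrow> 'a set \<Rightarrow> ('a \<Rightarrow> 'a \<Rightarrow> bool) \<Rightarrow> 'a set \<Rightarrow> bool" where
  "plantation s V adj Z \<longleftrightarrow> simple_graph V adj \<and> sO_free s V adj \<and> cycle_hitting V adj Z"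

definition adjF :: "('a \<Rightarrow> 'a \<Rightarrow> bool) \<Rightarrow> 'a set \<Rightarrow> 'a \<Rightarrow> 'a \<Rightarrow> bool" where
  "adjF adj Z u v \<longleftrightarrow> adj u v \<and> u \<notin> Z \<and> v \<notin> Z"

definition attach :: "'a set \<Rightarrow> ('a \<Rightarrow> 'a \<Rightarrow> bool) \<Rightarrow> 'a set \<Rightarrow> 'a set" where
  "attach V adj Z = {v \<in> V - Z. \<exists>z\<in>Z. adj v z}"

definition transition :: "'a set \<Rightarrow> ('a \<Rightarrow> 'a \<Rightarrow> bool) \<Rightarrow> 'a set \<Rightarrow> 'a list \<Rightarrow> bool" where
  "transition V adj Z xs \<longleftrightarrow> is_path (V - Z) (adjF adj Z) xs \<and> length xs \<ge> 2 \<and>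
     hd xs \<in> attach V adj Z \<and> last xs \<in> attach V adj Z \<and>
     (\<forall>i. 0 < i \<and> i < length xs - 1 \<longrightarrow> xs ! i \<notin> attach V adj Z)"

definition normal_set :: "('a \<Rightarrow> 'a \<Rightarrow> bool) \<Rightarrow> 'a list set \<Rightarrow> bool" where
  "normal_set adj S \<longleftrightarrow>
     (\<forall>P\<in>S. \<forall>Q\<in>S. P \<noteq> Q \<longrightarrow>
        anticomplete adj (set P) (set Q) \<or> path_ends P \<inter> path_ends Q \<noteq> {}) \<and>
     (\<forall>P\<in>S. \<exists>e\<in>path_edges P. \<forall>Q\<in>S. Q \<noteq> P \<longrightarrow> e \<notin> path_edges Q)"

end

theory Submission
  imports Defs
begin

(*
  Since Z is cycle-hitting, F = G - Z is a forest; this is all that is used (neither s >= 1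
  nor the sO-freeness matters). Root every component of F at one of its vertices of N and
  orient it towards the root. For each other vertex b of N, climbing from b towards the root
  until the next vertex c(b) of N gives a transition P_b. Let g(b) count the climbs from b to
  its root. If P_b and P_b' have no common end but are joined by an edge, that edge goes from
  c(b) to its parent (or vice versa), which lies on P_b'; hence c(c(b)) is b' or c(b'), so
  g(b) - g(b') is 1 or 2. The first edge of P_b lies on another P_b' only if b = c(b'), i.e.
  g(b') = g(b) + 1. So the b with g(b) divisible by 3 give a normal set. Shifting g by a
  constant on each component, some shift captures at least a third of the m - 1 non-root
  vertices of N in a component with m >= 2 of them, and ceil((m - 1) / 3) >= m / 4.
*)

section \<open>Paths\<close>

lemma is_path_singleton [simp]: "is_path W E [x] \<longleftrightarrow> x \<in> W"
  by (simp add: is_path_def)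

lemma is_path_Cons_Cons:
  "is_path W E (x # y # ys) \<longleftrightarrow> x \<in> W \<and> x \<notin> set (y # ys) \<and> E x y \<and> is_path W E (y # ys)"
  by (auto simp: is_path_def All_less_Suc2)

lemma rtranclp_hd_last_path: "is_path W E xs \<Longrightarrow> E\<^sup>*\<^sup>* (hd xs) (last xs)"
proof (induction xs rule: induct_list012)
  case (3 x y ys)
  then show ?case
    by (auto simp: is_path_Cons_Cons intro: converse_rtranclp_into_rtranclp)
qed (auto simp: is_path_def)

lemma is_path_snoc:
  assumes "is_path W E xs" "y \<in> W" "y \<notin> set xs" "E (last xs) y"
  shows "is_path W E (xs @ [y])"
proof -
  have ne: "xs \<noteq> []" using assms(1) by (simp add: is_path_def)
  have "E ((xs @ [y]) ! i) ((xs @ [y]) ! (i + 1))" if "i < length (xs @ [y]) - 1" for i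
  proof (cases "i + 1 < length xs")
    case True
    then show ?thesis using assms(1) by (auto simp: is_path_def nth_append)
  next
    case False
    then have "i = length xs - 1" using that by simp
    then show ?thesis using assms(4) ne by (simp add: nth_append last_conv_nth)
  qed
  then show ?thesis using assms ne by (auto simp: is_path_def)
qed

lemma is_cycle_drop_path:
  assumes "is_path W E xs" "i + 2 < length xs" "E (last xs) (xs ! i)"
  shows "is_cycle W E (drop i xs)"
proof -
  have "E (drop i xs ! j) (drop i xs ! (j + 1))" if "j < length (drop i xs) - 1" for j
    using assms(1) that assms(2) by (auto simp: is_path_def nth_drop)
  moreover have "last (drop i xs) = last xs" "hd (drop i xs) = xs ! i"
    using assms(2) by (simp_all add: hd_drop_conv_nth)
  ultimately show ?thesis using assms
    by (auto simp: is_cycle_def is_path_def dest: in_set_dropD)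
qed

lemma path_edges_subset: "e \<in> path_edges xs \<Longrightarrow> e \<subseteq> set xs"
  by (auto simp: path_edges_def)

lemma first_path_edge: "2 \<le> length xs \<Longrightarrow> {xs ! 0, xs ! 1} \<in> path_edges xs"
  unfolding path_edges_def by force

lemma distinct_inner_nth_notin:
  assumes "distinct xs" "\<And>y. y \<in> set xs \<Longrightarrow> y \<in> A \<Longrightarrow> y = hd xs \<or> y = last xs"
    and "0 < i" "i < length xs - 1"
  shows "xs ! i \<notin> A"
proof
  assume "xs ! i \<in> A"
  moreover have "xs \<noteq> []" using assms(4) by auto
  ultimately have "xs ! i = xs ! 0 \<or> xs ! i = xs ! (length xs - 1)"
    using assms(2,4) by (auto simp: hd_conv_nth last_conv_nth)
  moreover have "i < length xs" "0 < length xs" using assms(4) by auto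
  ultimately have "i = 0 \<or> i = length xs - 1"
    using assms(1) by (metis diff_less nth_eq_iff_index_eq zero_less_one)
  then show False using assms(3,4) by auto
qed

section \<open>Forests\<close>

definition forest :: "'a set \<Rightarrow> ('a \<Rightarrow> 'a \<Rightarrow> bool) \<Rightarrow> bool" where
  "forest W E \<longleftrightarrow> simple_graph W E \<and> (\<forall>xs. \<not> is_cycle W E xs)"

lemma forest_delete_vertex:
  "forest W E \<Longrightarrow> forest (W - {l}) (\<lambda>u v. E u v \<and> u \<noteq> l \<and> v \<noteq> l)"
  by (auto simp: forest_def simple_graph_def is_cycle_def)

lemma forest_path_last_neighbour:
  assumes forest: "forest W E" and path: "is_path W E xs" and "E (last xs) y" "y \<in> set xs"
  shows "2 \<le> length xs \<and> y = xs ! (length xs - 2)"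
proof -
  obtain i where i: "i < length xs" "y = xs ! i" using assms(4) by (auto simp: in_set_conv_nth)
  have "xs \<noteq> []" using i(1) by auto
  then have "last xs = xs ! (length xs - 1)" by (simp add: last_conv_nth)
  then have "i \<noteq> length xs - 1"
    using assms(3) i forest by (auto simp: forest_def simple_graph_def)
  moreover have "\<not> i + 2 < length xs"
    using is_cycle_drop_path[OF path, of i] assms(3) i forest by (auto simp: forest_def)
  ultimately have "i = length xs - 2" "2 \<le> length xs" using i(1) by arith+
  then show ?thesis using i(2) by simp
qed

lemma exists_maximal_path:
  assumes graph: "simple_graph W E" and "r \<in> W"
  obtains xs where "is_path W E xs" "hd xs = r" "\<And>y. E (last xs) y \<Longrightarrow> y \<in> set xs"
proof -
  let ?P = "\<lambda>xs. is_path W E xs \<and> hd xs = r"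
  have "?P [r]" using \<open>r \<in> W\<close> by simp
  moreover have "length xs < Suc (card W)" if "?P xs" for xs
    using that graph card_mono distinct_card
    by (metis is_path_def le_imp_less_Suc simple_graph_def)
  ultimately obtain xs where xs: "?P xs" and longest: "\<And>ys. ?P ys \<Longrightarrow> length ys \<le> length xs"
    using Lattices_Big.ex_has_greatest_nat[of ?P "[r]" length "Suc (card W)"] by blast
  have "y \<in> set xs" if "E (last xs) y" for y
  proof (rule ccontr)
    assume "y \<notin> set xs"
    moreover have "y \<in> W" "xs \<noteq> []" using that graph xs by (auto simp: simple_graph_def is_path_def)
    ultimately have "?P (xs @ [y])" using is_path_snoc xs that by auto
    then show False using longest by force
  qed
  then show thesis using that xs by blast
qed

lemma forest_pendant_vertex:
  assumes forest: "forest W E" and "R \<subseteq> W" "R \<noteq> {}"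
    and uniq: "\<And>r r'. r \<in> R \<Longrightarrow> r' \<in> R \<Longrightarrow> E\<^sup>*\<^sup>* r r' \<Longrightarrow> r = r'"
  shows "\<exists>l\<in>W. \<exists>p. l \<in> R \<and> (\<forall>u. \<not> E l u) \<or> l \<notin> R \<and> (\<forall>u. E l u \<longleftrightarrow> u = p)"
proof -
  have graph: "simple_graph W E" using forest by (simp add: forest_def)
  obtain r where "r \<in> R" using assms(3) by blast
  then obtain xs where xs: "is_path W E xs" "hd xs = r" and maximal: "\<And>y. E (last xs) y \<Longrightarrow> y \<in> set xs"
    using exists_maximal_path[OF graph] assms(2) by blast
  have neighbour: "2 \<le> length xs \<and> y = xs ! (length xs - 2)" if "E (last xs) y" for y
    using forest_path_last_neighbour[OF forest xs(1) that maximal[OF that]] .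
  have ne: "xs \<noteq> []" and last_W: "last xs \<in> W" using xs by (auto simp: is_path_def)
  show ?thesis
  proof (cases "2 \<le> length xs")
    case False
    then have "length xs = 1" using ne by (cases xs) (auto simp: Suc_le_eq)
    then have "last xs = r" using ne xs(2) by (simp add: last_conv_nth hd_conv_nth)
    then show ?thesis using \<open>r \<in> R\<close> neighbour last_W False by metis
  next
    case True
    define p where "p = xs ! (length xs - 2)"
    have "E (xs ! (length xs - 2)) (xs ! Suc (length xs - 2))"
      using xs True by (auto simp: is_path_def)
    moreover have "Suc (length xs - 2) = length xs - 1" using True by simp
    ultimately have "E p (last xs)" using ne by (simp add: p_def last_conv_nth)
    then have "E (last xs) p" using graph by (auto simp: simple_graph_def)
    moreover have "last xs \<notin> R"
    proof
      assume "last xs \<in> R"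
      then have "hd xs = last xs" using uniq xs \<open>r \<in> R\<close> rtranclp_hd_last_path by blast
      then show False using xs True ne
        by (auto simp: is_path_def hd_conv_nth last_conv_nth nth_eq_iff_index_eq)
    qed
    ultimately show ?thesis using neighbour last_W p_def by metis
  qed
qed

lemma rtranclp_avoid_pendant:
  assumes pendant: "\<And>u. E l u \<Longrightarrow> u = p" and sym: "\<And>u v. E u v \<Longrightarrow> E v u"
    and irrefl: "\<not> E l l"
    and "E\<^sup>*\<^sup>* w x" "w \<noteq> l" "x \<noteq> l"
  shows "(\<lambda>u v. E u v \<and> u \<noteq> l \<and> v \<noteq> l)\<^sup>*\<^sup>* w x"
proof -
  let ?E = "\<lambda>u v. E u v \<and> u \<noteq> l \<and> v \<noteq> l"
  \<comment> \<open>a walk through the pendant vertex l enters and leaves it via p\<close>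
  have "?E\<^sup>*\<^sup>* w x \<and> x \<noteq> l \<or> x = l \<and> ?E\<^sup>*\<^sup>* w p"
    using \<open>E\<^sup>*\<^sup>* w x\<close>
  proof induction
    case base
    then show ?case using \<open>w \<noteq> l\<close> by simp
  next
    case (step x y)
    show ?case
    proof (cases "y = l")
      case True
      then show ?thesis using step pendant sym by blast
    next
      case False
      then show ?thesis using step pendant irrefl by (auto intro: rtranclp.rtrancl_into_rtrancl)
    qed
  qed
  then show ?thesis using \<open>x \<noteq> l\<close> by blast
qed

lemma reach_roots_delete_pendant:
  assumes graph: "simple_graph W E"
    and pendant: "l \<in> R \<and> (\<forall>u. \<not> E l u) \<or> l \<notin> R \<and> (\<forall>u. E l u \<longleftrightarrow> u = p)"
    and reach: "\<forall>v\<in>W. \<exists>r\<in>R. E\<^sup>*\<^sup>* v r" and v: "v \<in> W - {l}"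
  shows "\<exists>r\<in>R - {l}. (\<lambda>u v. E u v \<and> u \<noteq> l \<and> v \<noteq> l)\<^sup>*\<^sup>* v r"
proof -
  have sym: "\<And>u v. E u v \<Longrightarrow> E v u" and irrefl: "\<And>u. \<not> E u u"
    using graph by (auto simp: simple_graph_def)
  obtain r where r: "r \<in> R" "E\<^sup>*\<^sup>* v r" using reach v by blast
  have "r \<noteq> l"
  proof
    assume "r = l"
    then obtain u where "E u l" using r(2) v by (auto elim: rtranclp.cases)
    then show False using pendant sym r(1) \<open>r = l\<close> by blast
  qed
  moreover have "(\<lambda>u v. E u v \<and> u \<noteq> l \<and> v \<noteq> l)\<^sup>*\<^sup>* v r"
    using rtranclp_avoid_pendant[OF _ sym irrefl r(2)] pendant v \<open>r \<noteq> l\<close> by blast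
  ultimately show ?thesis using r(1) by blast
qed

(* par orients every edge towards R; par and dep are unconstrained on R *)
definition rooted_orientation ::
    "'a set \<Rightarrow> ('a \<Rightarrow> 'a \<Rightarrow> bool) \<Rightarrow> 'a set \<Rightarrow> ('a \<Rightarrow> 'a) \<Rightarrow> ('a \<Rightarrow> nat) \<Rightarrow> bool" where
  "rooted_orientation W E R par dep \<longleftrightarrow>
     (\<forall>v\<in>W - R. E v (par v) \<and> dep v = Suc (dep (par v))) \<and>
     (\<forall>u v. E u v \<longrightarrow> u \<notin> R \<and> par u = v \<or> v \<notin> R \<and> par v = u)"

lemma rooted_orientation_add_pendant:
  assumes orient: "rooted_orientation (W - {l}) (\<lambda>u v. E u v \<and> u \<noteq> l \<and> v \<noteq> l) (R - {l}) par dep"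
    and graph: "simple_graph W E"
    and pendant: "l \<in> R \<and> (\<forall>u. \<not> E l u) \<or> l \<notin> R \<and> (\<forall>u. E l u \<longleftrightarrow> u = p)"
  shows "rooted_orientation W E R (par(l := p)) (dep(l := Suc (dep p)))"
proof -
  have sym: "E u v \<Longrightarrow> E v u" and irrefl: "\<not> E u u" for u v
    using graph by (auto simp: simple_graph_def)
  define par' where "par' = par(l := p)"
  define dep' where "dep' = dep(l := Suc (dep p))"
  have "E v (par' v) \<and> dep' v = Suc (dep' (par' v))"
    if v: "v \<in> W - R" for v
  proof (cases "v = l")
    case True
    then have "E l p" using v pendant by blast
    then show ?thesis using True irrefl by (auto simp: par'_def dep'_def)
  next
    case False
    then have "E v (par v) \<and> par v \<noteq> l \<and> dep v = Suc (dep (par v))"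
      using orient v by (auto simp: rooted_orientation_def)
    then show ?thesis using False by (simp add: par'_def dep'_def)
  qed
  moreover have "u \<notin> R \<and> par' u = v \<or> v \<notin> R \<and> par' v = u" if "E u v" for u v
  proof (cases "u = l \<or> v = l")
    case True
    then show ?thesis using \<open>E u v\<close> sym[of u v] pendant by (auto simp: par'_def)
  next
    case False
    then show ?thesis using \<open>E u v\<close> orient by (auto simp: rooted_orientation_def par'_def)
  qed
  ultimately show ?thesis by (simp add: rooted_orientation_def par'_def dep'_def)
qed

theorem forest_rooted_orientation:
  assumes "forest W E" "R \<subseteq> W"
    and "\<forall>v\<in>W. \<exists>r\<in>R. E\<^sup>*\<^sup>* v r" and "\<forall>r\<in>R. \<forall>r'\<in>R. E\<^sup>*\<^sup>* r r' \<longrightarrow> r = r'"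
  shows "\<exists>par dep. rooted_orientation W E R par dep"
proof -
  have "finite W" using assms(1) by (simp add: forest_def simple_graph_def)
  then show ?thesis using assms
  proof (induction W arbitrary: E R rule: finite_psubset_induct)
    case (psubset W E R)
    have graph: "simple_graph W E" using psubset.prems(1) by (simp add: forest_def)
    show ?case
    proof (cases "R = {}")
      case True
      then have "W = {}" using psubset.prems(3) by blast
      then show ?thesis using graph by (auto simp: rooted_orientation_def simple_graph_def)
    next
      case False
      obtain l p where "l \<in> W" and pendant: "l \<in> R \<and> (\<forall>u. \<not> E l u) \<or> l \<notin> R \<and> (\<forall>u. E l u \<longleftrightarrow> u = p)"
        using forest_pendant_vertex[OF psubset.prems(1,2) False] psubset.prems(4) by blast
      define E' where "E' = (\<lambda>u v. E u v \<and> u \<noteq> l \<and> v \<noteq> l)"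
      have reach: "\<forall>v\<in>W - {l}. \<exists>r\<in>R - {l}. E'\<^sup>*\<^sup>* v r"
        using reach_roots_delete_pendant[OF graph pendant psubset.prems(3)] unfolding E'_def by blast
      have "E'\<^sup>*\<^sup>* \<le> E\<^sup>*\<^sup>*" by (rule rtranclp_mono) (auto simp: E'_def)
      then have uniq: "\<forall>r\<in>R - {l}. \<forall>r'\<in>R - {l}. E'\<^sup>*\<^sup>* r r' \<longrightarrow> r = r'"
        using psubset.prems(4) by blast
      have "W - {l} \<subset> W" using \<open>l \<in> W\<close> by blast
      moreover have "forest (W - {l}) E'"
        unfolding E'_def using psubset.prems(1) by (rule forest_delete_vertex)
      moreover have "R - {l} \<subseteq> W - {l}" using psubset.prems(2) by blast
      ultimately have "\<exists>par dep. rooted_orientation (W - {l}) E' (R - {l}) par dep"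
        using reach uniq by (intro psubset.IH) auto
      then obtain par dep where "rooted_orientation (W - {l}) E' (R - {l}) par dep" by blast
      then show ?thesis
        using rooted_orientation_add_pendant[OF _ graph pendant] unfolding E'_def by blast
    qed
  qed
qed

section \<open>Heights and residues modulo 3\<close>

lemma exists_height_function:
  fixes d :: "'a \<Rightarrow> nat"
  assumes "\<And>x. x \<in> A \<Longrightarrow> d (c x) < d x"
  shows "\<exists>h :: 'a \<Rightarrow> nat. \<forall>x\<in>A. h x = Suc (h (c x))"
proof -
  define H :: "nat \<Rightarrow> 'a \<Rightarrow> nat"
    where "H = rec_nat (\<lambda>_. 0) (\<lambda>_ G x. if x \<in> A then Suc (G (c x)) else 0)"
  have H_Suc: "H (Suc n) x = (if x \<in> A then Suc (H n (c x)) else 0)" for n x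
    by (simp add: H_def)
  have H_fuel: "H n x = H m x" if "d x < n" "d x < m" for n m x
    using that
  proof (induction n arbitrary: m x)
    case (Suc n)
    then obtain m' where m: "m = Suc m'" by (cases m) auto
    have "d (c x) < n \<and> d (c x) < m'" if "x \<in> A" using assms[OF that] Suc.prems m by auto
    then show ?case using Suc.IH by (simp add: H_Suc m)
  qed simp
  have "\<forall>x\<in>A. H (Suc (d x)) x = Suc (H (Suc (d (c x))) (c x))"
  proof
    fix x assume "x \<in> A"
    moreover have "H (d x) (c x) = H (Suc (d (c x))) (c x)"
      by (rule H_fuel) (use assms[OF \<open>x \<in> A\<close>] in auto)
    ultimately show "H (Suc (d x)) x = Suc (H (Suc (d (c x))) (c x))"
      unfolding H_Suc[of "d x" x] by simp
  qed
  then show ?thesis by (rule exI[where x = "\<lambda>x. H (Suc (d x)) x"])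
qed

lemma mod_3_add_neq:
  fixes n :: nat
  shows "(n + 1) mod 3 \<noteq> n mod 3" "(n + 2) mod 3 \<noteq> n mod 3"
  by presburger+

lemma exists_shift_mod3:
  fixes f :: "'a \<Rightarrow> nat"
  assumes "finite A" "A \<noteq> {}"
  shows "\<exists>k. card A < 4 * card {a \<in> A. (f a + k) mod 3 = 0}"
proof (rule ccontr)
  define X where "X k = {a \<in> A. (f a + k) mod 3 = 0}" for k
  assume "\<not> ?thesis"
  then have small: "4 * card (X k) \<le> card A" for k by (simp add: X_def not_less)
  have "A \<subseteq> X 0 \<union> X 1 \<union> X 2"
  proof
    fix a assume "a \<in> A"
    moreover have "(f a + 0) mod 3 = 0 \<or> (f a + 1) mod 3 = 0 \<or> (f a + 2) mod 3 = 0" by presburger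
    ultimately show "a \<in> X 0 \<union> X 1 \<union> X 2" unfolding X_def by blast
  qed
  then have "card A \<le> card (X 0 \<union> X 1 \<union> X 2)" using assms(1) by (simp add: card_mono X_def)
  also have "\<dots> \<le> card (X 0 \<union> X 1) + card (X 2)" by (rule card_Un_le)
  also have "\<dots> \<le> card (X 0) + card (X 1) + card (X 2)" using card_Un_le[of "X 0" "X 1"] by simp
  finally have "card A \<le> card (X 0) + card (X 1) + card (X 2)" .
  moreover have "0 < card A" using assms by auto
  ultimately show False using small[of 0] small[of 1] small[of 2] by linarith
qed

lemma exists_offsets_mod3:
  fixes h :: "'a \<Rightarrow> nat"
  assumes fin: "finite A"
    and rep: "\<And>x. x \<in> A \<Longrightarrow> rep x \<in> A \<and> rep (rep x) = rep x"
    and big: "\<And>x. x \<in> A \<Longrightarrow> 2 \<le> card {y \<in> A. rep y = rep x}"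
  shows "\<exists>off. card A \<le> 4 * card {x \<in> A. rep x \<noteq> x \<and> (h x + off (rep x)) mod 3 = 0}"
proof -
  define C where "C r = {y \<in> A. rep y = r}" for r
  define X where "X r k = {y \<in> C r - {r}. (h y + k) mod 3 = 0}" for r k
  have "\<exists>k. card (C r) \<le> 4 * card (X r k)" if r: "r \<in> rep ` A" for r
  proof -
    have "r \<in> C r" "2 \<le> card (C r)" "finite (C r)"
      using r rep big fin by (auto simp: C_def)
    then have card: "card (C r) = Suc (card (C r - {r}))" by (simp add: card_Suc_Diff1)
    moreover have "card (C r - {r}) \<noteq> 0" using card \<open>2 \<le> card (C r)\<close> by linarith
    ultimately have "C r - {r} \<noteq> {}" by force
    then obtain k where "card (C r - {r}) < 4 * card (X r k)"
      unfolding X_def using exists_shift_mod3[of "C r - {r}" h] \<open>finite (C r)\<close> by blast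
    then show ?thesis using card by (intro exI[of _ k]) simp
  qed
  then have "\<forall>r\<in>rep ` A. \<exists>k. card (C r) \<le> 4 * card (X r k)" by blast
  from bchoice[OF this] obtain off where off: "\<forall>r\<in>rep ` A. card (C r) \<le> 4 * card (X r (off r))"
    by blast
  have fin_classes: "finite (rep ` A)" "finite (C r)" "finite (X r k)" for r k
    using fin by (auto simp: C_def X_def)
  have disj: "C r \<inter> C r' = {}" "X r k \<inter> X r' k' = {}" if "r \<noteq> r'" for r r' k k'
    using that by (auto simp: C_def X_def)
  have "card (\<Union>r\<in>rep ` A. C r) = (\<Sum>r\<in>rep ` A. card (C r))"
    by (rule card_UN_disjoint) (use fin_classes disj in auto)
  moreover have "(\<Union>r\<in>rep ` A. C r) = A" using rep by (auto simp: C_def)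
  ultimately have "card A = (\<Sum>r\<in>rep ` A. card (C r))" by simp
  also have "\<dots> \<le> (\<Sum>r\<in>rep ` A. 4 * card (X r (off r)))" using off by (intro sum_mono) blast
  also have "\<dots> = 4 * card (\<Union>r\<in>rep ` A. X r (off r))"
    unfolding sum_distrib_left[symmetric]
    by (subst card_UN_disjoint) (use fin_classes disj in auto)
  also have "(\<Union>r\<in>rep ` A. X r (off r)) = {x \<in> A. rep x \<noteq> x \<and> (h x + off (rep x)) mod 3 = 0}"
    by (auto simp: X_def C_def)
  finally show ?thesis by blast
qed

section \<open>Climbs\<close>

definition marked_transition :: "'a set \<Rightarrow> ('a \<Rightarrow> 'a \<Rightarrow> bool) \<Rightarrow> 'a set \<Rightarrow> 'a list \<Rightarrow> bool" where
  "marked_transition W E N xs \<longleftrightarrow> is_path W E xs \<and> length xs \<ge> 2 \<and>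
     hd xs \<in> N \<and> last xs \<in> N \<and> (\<forall>i. 0 < i \<and> i < length xs - 1 \<longrightarrow> xs ! i \<notin> N)"

locale marked_forest =
  fixes W :: "'a set" and E :: "'a \<Rightarrow> 'a \<Rightarrow> bool" and N R :: "'a set"
    and par :: "'a \<Rightarrow> 'a" and dep :: "'a \<Rightarrow> nat"
  assumes graph: "simple_graph W E"
    and roots_marked: "R \<subseteq> N" and marked_subset: "N \<subseteq> W"
    and orientation: "rooted_orientation W E R par dep"
begin

lemma par_edge:
  assumes "x \<in> W - R"
  shows "E x (par x) \<and> par x \<in> W \<and> dep (par x) < dep x"
proof -
  have "E x (par x) \<and> dep x = Suc (dep (par x))"
    using orientation assms by (simp add: rooted_orientation_def)
  then show ?thesis using graph unfolding simple_graph_def by auto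
qed

lemma edge_par: "E u v \<Longrightarrow> u \<notin> R \<and> par u = v \<or> v \<notin> R \<and> par v = u"
  using orientation by (auto simp: rooted_orientation_def)

lemma climb_induct [consumes 1, case_names step]:
  assumes "x \<in> W - R"
    and "\<And>x. x \<in> W - R \<Longrightarrow> (par x \<notin> N \<Longrightarrow> P (par x)) \<Longrightarrow> P x"
  shows "P x"
  using assms(1)
proof (induction "dep x" arbitrary: x rule: less_induct)
  case less
  then show ?case using assms(2) par_edge roots_marked by blast
qed

(* dep x bounds the number of steps of the climb from x, so it serves as fuel *)
fun climb_fuel :: "nat \<Rightarrow> 'a \<Rightarrow> 'a list" where
  "climb_fuel 0 x = [x]"
| "climb_fuel (Suc n) x = x # (if par x \<in> N then [par x] else climb_fuel n (par x))"

definition climb :: "'a \<Rightarrow> 'a list" where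
  "climb x = climb_fuel (dep x) x"

definition climb_end :: "'a \<Rightarrow> 'a" where
  "climb_end x = last (climb x)"

lemma hd_climb [simp]: "hd (climb x) = x"
  by (cases "dep x") (simp_all add: climb_def)

lemma climb_not_Nil [simp]: "climb x \<noteq> []"
  by (cases "dep x") (simp_all add: climb_def)

lemma self_mem_climb [simp]: "x \<in> set (climb x)"
  using hd_in_set[OF climb_not_Nil] by simp

lemma climb_fuel_eq_climb: "x \<in> W - R \<Longrightarrow> dep x \<le> n \<Longrightarrow> climb_fuel n x = climb x"
proof (induction x arbitrary: n rule: climb_induct)
  case (step x)
  obtain d where d: "dep x = Suc d" "dep (par x) \<le> d" using par_edge[OF step.hyps]
    by (cases "dep x") auto
  moreover obtain m where "n = Suc m" "d \<le> m" using step.prems d by (cases n) auto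
  ultimately show ?case using step.IH unfolding climb_def[of x] by simp
qed

lemma climb_unfold:
  assumes "x \<in> W - R"
  shows "climb x = x # (if par x \<in> N then [par x] else climb (par x))"
proof -
  obtain d where d: "dep x = Suc d" "dep (par x) \<le> d"
    using par_edge[OF assms] by (cases "dep x") auto
  have "par x \<notin> N \<Longrightarrow> climb_fuel d (par x) = climb (par x)"
    using climb_fuel_eq_climb par_edge[OF assms] roots_marked d(2) by blast
  then show ?thesis unfolding climb_def[of x] d(1) by simp
qed

lemma climb_end_unfold:
  "x \<in> W - R \<Longrightarrow> climb_end x = (if par x \<in> N then par x else climb_end (par x))"
  by (simp add: climb_end_def climb_unfold[of x])

lemma climb_nth_1: "x \<in> W - R \<Longrightarrow> climb x ! 1 = par x"
  using hd_conv_nth[OF climb_not_Nil, of "par x"] by (simp add: climb_unfold[of x])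

lemma dep_climb_less: "x \<in> W - R \<Longrightarrow> y \<in> set (climb x) \<Longrightarrow> y \<noteq> x \<Longrightarrow> dep y < dep x"
proof (induction x rule: climb_induct)
  case (step x)
  then show ?case using par_edge[OF step.hyps]
    by (cases "par x \<in> N") (auto simp: climb_unfold[OF step.hyps] dest: less_trans)
qed

lemma climb_end_marked: "x \<in> W - R \<Longrightarrow> climb_end x \<in> N"
proof (induction x rule: climb_induct)
  case (step x)
  then show ?case by (simp add: climb_end_unfold[OF step.hyps])
qed

lemma dep_climb_end_less: "x \<in> W - R \<Longrightarrow> dep (climb_end x) < dep x"
proof (induction x rule: climb_induct)
  case (step x)
  then show ?case
    using par_edge[OF step.hyps] by (auto simp: climb_end_unfold[OF step.hyps] intro: less_trans)
qed

lemma is_path_climb: "x \<in> W - R \<Longrightarrow> is_path W E (climb x) \<and> 2 \<le> length (climb x)"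
proof (induction x rule: climb_induct)
  case (step x)
  define T where "T = (if par x \<in> N then [par x] else climb (par x))"
  have T: "is_path W E T" "hd T = par x" "T \<noteq> []"
    using step par_edge[OF step.hyps] by (auto simp: T_def)
  have "x \<noteq> par x" using par_edge[OF step.hyps] by auto
  moreover have "x \<notin> set (climb (par x))" if "par x \<notin> N"
    using dep_climb_less[of "par x" x] par_edge[OF step.hyps] roots_marked that \<open>x \<noteq> par x\<close>
    by auto
  ultimately have "x \<notin> set T" by (auto simp: T_def)
  then have "is_path W E (x # T)"
    using T step.hyps par_edge[OF step.hyps] by (cases T) (auto simp: is_path_Cons_Cons)
  then show ?case using T by (simp add: climb_unfold[OF step.hyps] T_def[symmetric] Suc_le_eq)
qed

lemma climb_marked_mem:
  "x \<in> W - R \<Longrightarrow> y \<in> set (climb x) \<Longrightarrow> y \<in> N \<Longrightarrow> y = x \<or> y = climb_end x"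
proof (induction x rule: climb_induct)
  case (step x)
  then show ?case
    by (cases "par x \<in> N") (auto simp: climb_unfold[OF step.hyps] climb_end_unfold[OF step.hyps])
qed

lemma climb_end_mem:
  "x \<in> W - R \<Longrightarrow> y \<in> set (climb x) \<Longrightarrow> y \<notin> N \<Longrightarrow> climb_end y = climb_end x"
proof (induction x rule: climb_induct)
  case (step x)
  then show ?case
    by (cases "par x \<in> N") (auto simp: climb_unfold[OF step.hyps] climb_end_unfold[OF step.hyps])
qed

lemma par_mem_climb:
  "x \<in> W - R \<Longrightarrow> y \<in> set (climb x) \<Longrightarrow> y \<noteq> climb_end x \<Longrightarrow> y \<notin> R \<and> par y \<in> set (climb x)"
proof (induction x rule: climb_induct)
  case (step x)
  then show ?case
    by (cases "par x \<in> N") (auto simp: climb_unfold[OF step.hyps] climb_end_unfold[OF step.hyps])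
qed

lemma rtranclp_climb_end: "x \<in> W - R \<Longrightarrow> E\<^sup>*\<^sup>* x (climb_end x)"
  using rtranclp_hd_last_path[of W E "climb x"] is_path_climb by (simp add: climb_end_def)

lemma marked_transition_climb: "b \<in> N - R \<Longrightarrow> marked_transition W E N (climb b)"
  using is_path_climb[of b] climb_marked_mem[of b] climb_end_marked[of b] marked_subset
    distinct_inner_nth_notin[of "climb b" N]
  by (auto simp: marked_transition_def is_path_def climb_end_def)

lemma climbs_disjoint:
  assumes "b \<in> N - R" "b' \<in> N - R" "{b, climb_end b} \<inter> {b', climb_end b'} = {}"
  shows "set (climb b) \<inter> set (climb b') = {}"
proof -
  have bW: "b \<in> W - R" "b' \<in> W - R" using assms(1,2) marked_subset by auto
  have False if w: "w \<in> set (climb b)" "w \<in> set (climb b')" for w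
  proof (cases "w \<in> N")
    case True
    then show False
      using climb_marked_mem[OF bW(1) w(1) True] climb_marked_mem[OF bW(2) w(2) True] assms(3)
      by blast
  next
    case False
    then show False
      using climb_end_mem[OF bW(1) w(1) False] climb_end_mem[OF bW(2) w(2) False] assms(3)
      by blast
  qed
  then show ?thesis by blast
qed

lemma height_step_across_climbs:
  assumes b: "b \<in> N - R" "b' \<in> N - R" and ends: "{b, climb_end b} \<inter> {b', climb_end b'} = {}"
    and u: "u \<in> set (climb b)" "u \<notin> R" "par u \<in> set (climb b')"
    and height: "\<forall>x\<in>N - R. g x = Suc (g (climb_end x))"
  shows "g b = g b' + 1 \<or> g b = g b' + 2"
proof -
  have bW: "b \<in> W - R" "b' \<in> W - R" using b marked_subset by auto
  have "u = climb_end b"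
    using par_mem_climb[OF bW(1) u(1)] climbs_disjoint[OF b ends] u(3) by blast
  then have c: "climb_end b \<in> W - R" "par (climb_end b) \<in> set (climb b')"
    using u climb_end_marked[OF bW(1)] marked_subset by auto
  have "climb_end (climb_end b) \<in> {b', climb_end b'}"
    using climb_end_unfold[OF c(1)] climb_marked_mem[OF bW(2) c(2)] climb_end_mem[OF bW(2) c(2)]
    by auto
  then show ?thesis
    using height b climb_end_marked[OF bW(1)] c(1) by auto
qed

lemma climbs_anticomplete:
  assumes b: "b \<in> N - R" "b' \<in> N - R" and ends: "{b, climb_end b} \<inter> {b', climb_end b'} = {}"
    and height: "\<forall>x\<in>N - R. g x = Suc (g (climb_end x))"
    and residue: "g b mod 3 = g b' mod 3"
  shows "anticomplete E (set (climb b)) (set (climb b'))"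
proof -
  have "\<not> E u v" if uv: "u \<in> set (climb b)" "v \<in> set (climb b')" for u v
  proof
    assume "E u v"
    then consider "u \<notin> R" "par u = v" | "v \<notin> R" "par v = u" using edge_par by blast
    then show False
    proof cases
      case 1
      then have "g b = g b' + 1 \<or> g b = g b' + 2"
        using height_step_across_climbs[OF b ends uv(1)] uv(2) height by blast
      then show False using residue mod_3_add_neq[of "g b'"] by auto
    next
      case 2
      have "{b', climb_end b'} \<inter> {b, climb_end b} = {}" using ends by blast
      then have "g b' = g b + 1 \<or> g b' = g b + 2"
        using height_step_across_climbs[OF b(2,1) _ uv(2)] 2 uv(1) height by blast
      then show False using residue mod_3_add_neq[of "g b"] by auto
    qed
  qed
  then show ?thesis using climbs_disjoint[OF b ends] by (auto simp: anticomplete_def)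
qed

lemma first_climb_edge_private:
  assumes b: "b \<in> N - R" "b' \<in> N - R" "b \<noteq> b'"
    and height: "\<forall>x\<in>N - R. g x = Suc (g (climb_end x))"
    and residue: "g b mod 3 = g b' mod 3"
  shows "{b, par b} \<notin> path_edges (climb b')"
proof
  assume "{b, par b} \<in> path_edges (climb b')"
  then have "b \<in> set (climb b')" using path_edges_subset by blast
  moreover have "b' \<in> W - R" using b marked_subset by auto
  ultimately have "b = climb_end b'" using climb_marked_mem b by blast
  then have "g b' = g b + 1" using height b by auto
  then show False using residue mod_3_add_neq[of "g b"] by simp
qed

theorem normal_set_climbs:
  assumes B: "B \<subseteq> N - R" and height: "\<forall>x\<in>N - R. g x = Suc (g (climb_end x))"
    and residue: "\<forall>b\<in>B. g b mod 3 = 0"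
  shows "normal_set E (climb ` B)"
proof -
  have "anticomplete E (set (climb b)) (set (climb b')) \<or>
      path_ends (climb b) \<inter> path_ends (climb b') \<noteq> {}"
    if "b \<in> B" "b' \<in> B" for b b'
  proof (cases "{b, climb_end b} \<inter> {b', climb_end b'} = {}")
    case True
    moreover have "b \<in> N - R" "b' \<in> N - R" using that B by auto
    moreover have "g b mod 3 = g b' mod 3" using residue that by simp
    ultimately show ?thesis using climbs_anticomplete[OF _ _ _ height] by blast
  next
    case False
    then show ?thesis by (auto simp: path_ends_def climb_end_def)
  qed
  moreover have "\<exists>e\<in>path_edges (climb b). \<forall>Q\<in>climb ` B. Q \<noteq> climb b \<longrightarrow> e \<notin> path_edges Q"
    if b: "b \<in> B" for b
  proof -
    have bW: "b \<in> W - R" using b B marked_subset by auto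
    have "{b, par b} \<in> path_edges (climb b)"
      using first_path_edge[of "climb b"] is_path_climb[OF bW] climb_nth_1[OF bW]
        hd_conv_nth[OF climb_not_Nil, of b] by simp
    moreover have "{b, par b} \<notin> path_edges Q" if Q: "Q \<in> climb ` B" "Q \<noteq> climb b" for Q
    proof -
      obtain b' where b': "b' \<in> B" "Q = climb b'" using Q(1) by blast
      have "b \<noteq> b'" using Q(2) b' by blast
      moreover have "g b mod 3 = g b' mod 3" using residue b b'(1) by simp
      moreover have "b \<in> N - R" "b' \<in> N - R" using b b'(1) B by auto
      ultimately show ?thesis using first_climb_edge_private[OF _ _ _ height] b'(2) by blast
    qed
    ultimately show ?thesis by blast
  qed
  ultimately show ?thesis unfolding normal_set_def by blast
qed

lemma exists_large_normal_climbs: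
  assumes "finite N"
    and rep: "\<And>x. x \<in> N \<Longrightarrow> rep x \<in> N \<and> E\<^sup>*\<^sup>* x (rep x)"
    and rep_cong: "\<And>v w. E\<^sup>*\<^sup>* v w \<Longrightarrow> rep v = rep w"
    and two_per_class: "\<And>x. x \<in> N \<Longrightarrow> 2 \<le> card {y \<in> N. rep y = rep x}"
    and roots: "R = rep ` N"
  shows "\<exists>B\<subseteq>N - R. normal_set E (climb ` B) \<and> card N \<le> 4 * card (climb ` B)"
proof -
  have rep_idem: "rep (rep x) = rep x" if "x \<in> N" for x
    using rep_cong rep[OF that] by metis
  have root_iff: "x \<in> R \<longleftrightarrow> rep x = x" if "x \<in> N" for x
    using that rep_idem unfolding roots by (metis image_iff)
  obtain g0 :: "'a \<Rightarrow> nat" where g0: "\<forall>x\<in>N - R. g0 x = Suc (g0 (climb_end x))"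
    using exists_height_function[of "N - R" dep climb_end] dep_climb_end_less marked_subset by blast
  obtain off where
    off: "card N \<le> 4 * card {x \<in> N. rep x \<noteq> x \<and> (g0 x + off (rep x)) mod 3 = 0}"
    using exists_offsets_mod3[OF \<open>finite N\<close>, of rep g0] rep rep_idem two_per_class by blast
  define g where "g x = g0 x + off (rep x)" for x
  define B where "B = {x \<in> N. rep x \<noteq> x \<and> g x mod 3 = 0}"
  have "B \<subseteq> N - R" using root_iff by (auto simp: B_def)
  moreover have "\<forall>x\<in>N - R. g x = Suc (g (climb_end x))"
  proof
    fix x assume x: "x \<in> N - R"
    then have "rep x = rep (climb_end x)"
      using marked_subset by (intro rep_cong rtranclp_climb_end) auto
    then show "g x = Suc (g (climb_end x))" using g0 x by (simp add: g_def)
  qed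
  ultimately have "normal_set E (climb ` B)" by (rule normal_set_climbs) (simp add: B_def)
  moreover have "inj_on climb B" by (metis hd_climb inj_onI)
  then have "card N \<le> 4 * card (climb ` B)" using off by (simp add: card_image B_def g_def)
  ultimately show ?thesis using \<open>B \<subseteq> N - R\<close> by blast
qed

end

lemma exists_marked_representatives:
  assumes "symp E" "N \<subseteq> W" "finite N"
    and two_marked: "\<forall>v\<in>W. 2 \<le> card {u \<in> N. E\<^sup>*\<^sup>* v u}"
  obtains rep where "\<And>v. v \<in> W \<Longrightarrow> rep v \<in> N \<and> E\<^sup>*\<^sup>* v (rep v)"
    and "\<And>v w. E\<^sup>*\<^sup>* v w \<Longrightarrow> rep v = rep w"
    and "\<And>x. x \<in> N \<Longrightarrow> 2 \<le> card {y \<in> N. rep y = rep x}"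
proof -
  define rep where "rep v = (SOME u. u \<in> N \<and> E\<^sup>*\<^sup>* v u)" for v
  have "equivp E\<^sup>*\<^sup>*" using assms(1) by (rule equivp_rtranclp)
  then have cong: "rep v = rep w" if "E\<^sup>*\<^sup>* v w" for v w
    unfolding rep_def using that by (metis equivp_def)
  have "rep v \<in> N \<and> E\<^sup>*\<^sup>* v (rep v)" if "v \<in> W" for v
  proof -
    have "{u \<in> N. E\<^sup>*\<^sup>* v u} \<noteq> {}"
      using two_marked that by (metis card.empty not_numeral_le_zero)
    then show ?thesis unfolding rep_def by (metis (mono_tags, lifting) empty_Collect_eq someI_ex)
  qed
  moreover have "2 \<le> card {y \<in> N. rep y = rep x}" if "x \<in> N" for x
  proof -
    have "{u \<in> N. E\<^sup>*\<^sup>* x u} \<subseteq> {y \<in> N. rep y = rep x}" using cong by auto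
    then have "card {u \<in> N. E\<^sup>*\<^sup>* x u} \<le> card {y \<in> N. rep y = rep x}"
      using \<open>finite N\<close> by (intro card_mono) auto
    moreover have "2 \<le> card {u \<in> N. E\<^sup>*\<^sup>* x u}" using two_marked that \<open>N \<subseteq> W\<close> by blast
    ultimately show ?thesis by linarith
  qed
  ultimately show thesis using that cong by blast
qed

theorem forest_normal_marked_transitions:
  assumes forest: "forest W E" and "N \<subseteq> W"
    and two_marked: "\<forall>v\<in>W. 2 \<le> card {u \<in> N. E\<^sup>*\<^sup>* v u}"
  shows "\<exists>S. (\<forall>P\<in>S. marked_transition W E N P) \<and> normal_set E S \<and> card N \<le> 4 * card S"
proof -
  have graph: "simple_graph W E" using forest by (simp add: forest_def)
  have "symp E" "finite N"
    using graph \<open>N \<subseteq> W\<close> finite_subset by (auto simp: simple_graph_def intro: sympI)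
  then obtain rep where rep: "\<And>v. v \<in> W \<Longrightarrow> rep v \<in> N \<and> E\<^sup>*\<^sup>* v (rep v)"
    and rep_cong: "\<And>v w. E\<^sup>*\<^sup>* v w \<Longrightarrow> rep v = rep w"
    and two_per_class: "\<And>x. x \<in> N \<Longrightarrow> 2 \<le> card {y \<in> N. rep y = rep x}"
    using exists_marked_representatives[OF _ \<open>N \<subseteq> W\<close> _ two_marked] by blast
  define R where "R = rep ` N"
  have rep_in_R: "rep v \<in> R" if "v \<in> W" for v
  proof -
    have "rep v \<in> N" "rep (rep v) = rep v" using rep[OF that] rep_cong[of v "rep v"] by auto
    then show ?thesis unfolding R_def by (intro image_eqI[where x = "rep v"]) simp_all
  qed
  have "R \<subseteq> N" using rep \<open>N \<subseteq> W\<close> by (auto simp: R_def)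
  have "\<exists>par dep. rooted_orientation W E R par dep"
  proof (rule forest_rooted_orientation[OF forest])
    show "R \<subseteq> W" using \<open>R \<subseteq> N\<close> \<open>N \<subseteq> W\<close> by blast
    show "\<forall>v\<in>W. \<exists>r\<in>R. E\<^sup>*\<^sup>* v r" using rep rep_in_R by blast
    have fixed: "rep r = r" if r: "r \<in> R" for r
    proof -
      obtain x where "x \<in> W" "r = rep x" using r \<open>N \<subseteq> W\<close> by (auto simp: R_def)
      then show ?thesis using rep rep_cong[of x "rep x"] by simp
    qed
    show "\<forall>r\<in>R. \<forall>r'\<in>R. E\<^sup>*\<^sup>* r r' \<longrightarrow> r = r'"
      using fixed rep_cong by (metis (no_types))
  qed
  then obtain par dep where "rooted_orientation W E R par dep" by blast
  then interpret marked_forest W E N R par dep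
    using graph \<open>R \<subseteq> N\<close> \<open>N \<subseteq> W\<close> by unfold_locales
  have "\<And>x. x \<in> N \<Longrightarrow> rep x \<in> N \<and> E\<^sup>*\<^sup>* x (rep x)" using rep \<open>N \<subseteq> W\<close> by blast
  then obtain B where "B \<subseteq> N - R" "normal_set E (climb ` B)" "card N \<le> 4 * card (climb ` B)"
    using exists_large_normal_climbs[OF \<open>finite N\<close> _ rep_cong two_per_class R_def] by blast
  moreover have "\<forall>P\<in>climb ` B. marked_transition W E N P"
    using marked_transition_climb \<open>B \<subseteq> N - R\<close> by blast
  ultimately show ?thesis by blast
qed

lemma forest_plantation:
  "plantation s V adj Z \<Longrightarrow> forest (V - Z) (adjF adj Z)"
  by (auto simp: plantation_def forest_def simple_graph_def cycle_hitting_def adjF_def is_cycle_def)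

lemma transition_iff_marked_transition:
  "transition V adj Z xs \<longleftrightarrow> marked_transition (V - Z) (adjF adj Z) (attach V adj Z) xs"
  by (simp add: transition_def marked_transition_def)

lemma normal_set_adjF:
  assumes "\<forall>P\<in>S. set P \<inter> Z = {}"
  shows "normal_set (adjF adj Z) S \<longleftrightarrow> normal_set adj S"
proof -
  have "anticomplete (adjF adj Z) (set P) (set Q) \<longleftrightarrow> anticomplete adj (set P) (set Q)"
    if "P \<in> S" "Q \<in> S" for P Q
    using assms[rule_format, OF that(1)] assms[rule_format, OF that(2)]
    unfolding anticomplete_def adjF_def by blast
  then show ?thesis unfolding normal_set_def by blast
qed

theorem mainTheorem11:
  fixes s :: nat and V Z :: "'a set" and adj :: "'a \<Rightarrow> 'a \<Rightarrow> bool"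
  assumes "s \<ge> 1"
    and "plantation s V adj Z"
    and "\<forall>v \<in> V - Z. card {u \<in> attach V adj Z. (adjF adj Z)\<^sup>*\<^sup>* v u} \<ge> 2"
  shows "\<exists>S. (\<forall>P\<in>S. transition V adj Z P) \<and> normal_set adj S \<and>
             real (card S) \<ge> real (card (attach V adj Z)) / 4"
proof -
  have "attach V adj Z \<subseteq> V - Z" by (auto simp: attach_def)
  then obtain S where S: "\<forall>P\<in>S. transition V adj Z P" "normal_set (adjF adj Z) S"
      and card: "card (attach V adj Z) \<le> 4 * card S"
    using forest_normal_marked_transitions[OF forest_plantation[OF assms(2)] _ assms(3)]
    by (auto simp: transition_iff_marked_transition)
  have "\<forall>P\<in>S. set P \<inter> Z = {}"
    using S(1) by (auto simp: transition_def is_path_def)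
  then have "normal_set adj S" using S(2) normal_set_adjF by blast
  moreover have "real (card (attach V adj Z)) / 4 \<le> real (card S)" using card by simp
  ultimately show ?thesis using S(1) by blast
qed

end
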